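(* Let $s,t\ge1$ and $k=s+t+4\le n$. Let $Q(s,t)$ be the graph on $k$ vertices consisting of a $4$-cycle $v_1v_2v_3v_4v_1$ with $s$ pendant vertices attached to $v_1$ and $t$ pendant vertices attached to $v_2$, and let $Q_1$ be the graph on $k$ vertices consisting of a $4$-cycle $v_1v_2v_3v_4v_1$ with $k-4$ pendant vertices attached to $v_1$. Let $\Gamma=(K_n,Q(s,t)^-)$ and $\Gamma'=(K_n,Q_1^-)$. Then $\lambda_1(\Gamma)<\lambda_1(\Gamma')$.
   Context: For a subgraph $H$ of $K_n$, $(K_n,H^-)$ denotes the signed complete graph on $n$ vertices whose negative edges are exactly the edges of $H$ (all other edges positive); its adjacency matrix has entry $-1$ for negative edges, $+1$ for positive edges and $0$ on the diagonal. $\lambda_1(\Gamma)$ (the index) is the largest eigenvalue of the adjacency matrix. *)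

theory Defs
  imports "Jordan_Normal_Form.Char_Poly"
begin

text \<open>Graphs on the vertex set {0..<n} are given by a set of edges (unordered pairs).
  Vertices 0,1,2,3 play the roles of v1,v2,v3,v4.\<close>

definition C4_edges :: "nat set set" where
  "C4_edges = {{0,1},{1,2},{2,3},{3,0}}"

definition Q_edges :: "nat \<Rightarrow> nat \<Rightarrow> nat set set" where
  "Q_edges s t = C4_edges \<union> {{0,p} | p. 4 \<le> p \<and> p < 4 + s}
                          \<union> {{1,p} | p. 4 + s \<le> p \<and> p < 4 + s + t}"

definition Q1_edges :: "nat \<Rightarrow> nat set set" where
  "Q1_edges k = C4_edges \<union> {{0,p} | p. 4 \<le> p \<and> p < k}"

definition signed_Kn :: "nat \<Rightarrow> nat set set \<Rightarrow> real mat" where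
  "signed_Kn n H = mat n n (\<lambda>(i,j). if i = j then 0 else if {i,j} \<in> H then -1 else 1)"

definition index :: "real mat \<Rightarrow> real" where
  "index A = Max {x. eigenvalue A x}"

end

theory Submission
  imports Defs
begin

text \<open>Put \<open>x = \<lambda> + 1\<close>, \<open>r = n - k\<close> and let \<open>S\<close> be the sum of the entries of an eigenvector
  of \<open>\<Gamma>\<close>. For \<open>x \<noteq> 0\<close> the eigen-equations force the entry \<open>(S - 2v\<^sub>1)/x\<close> at every pendant
  vertex of \<open>v\<^sub>1\<close>, \<open>(S - 2v\<^sub>2)/x\<close> at every pendant vertex of \<open>v\<^sub>2\<close> and \<open>S/x\<close> at every vertex
  outside \<open>Q(s,t)\<close>, so they collapse to a \<open>5\<times>5\<close> linear system in \<open>v\<^sub>1, \<dots>, v\<^sub>4, S\<close> whose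
  determinant \<open>Q_poly s t r x\<close> must vanish. With \<open>m = s + t\<close> and \<open>g = Q1_poly m r\<close>, the
  corresponding polynomial of \<open>Q\<^sub>1 = Q(m,0)\<close>, one has
  \<open>Q_poly = -(x\<^sup>2 g(x) + 8st(x\<^sup>2 - 4)(x\<^sup>2 - 2r))\<close>; hence \<open>g(\<lambda>\<^sub>1(\<Gamma>) + 1) < 0\<close> unless
  \<open>\<lambda>\<^sub>1(\<Gamma>) + 1 < m + r + 2\<close>, and \<open>g(m + r + 2) < 0\<close> as well. Since \<open>g > 0\<close> from \<open>m + r + 4\<close>
  on, \<open>g\<close> has a root \<open>\<rho> > \<lambda>\<^sub>1(\<Gamma>) + 1\<close>, and every nonzero root \<open>\<rho>\<close> of \<open>g\<close> makes \<open>\<rho> - 1\<close> an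
  eigenvalue of \<open>\<Gamma>'\<close>.\<close>

lemma finite_eigenvalues:
  fixes A :: "'a::field mat"
  assumes "A \<in> carrier_mat n n"
  shows "finite {\<mu>. eigenvalue A \<mu>}"
proof -
  have "char_poly A \<noteq> 0" using degree_monic_char_poly[OF assms] by auto
  then show ?thesis
    using poly_roots_finite by (simp add: eigenvalue_root_char_poly[OF assms])
qed

lemma eigenvalue_le_index:
  assumes "A \<in> carrier_mat n n" and "eigenvalue A \<mu>"
  shows "\<mu> \<le> index A"
  unfolding index_def using finite_eigenvalues[OF assms(1)] assms(2) by simp

lemma eigenvalue_index:
  assumes "A \<in> carrier_mat n n" and "eigenvalue A \<mu>"
  shows "eigenvalue A (index A)"
  unfolding index_def using Max_in[OF finite_eigenvalues[OF assms(1)]] assms(2) by blast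

lemma complex_mat_has_eigenvalue:
  fixes A :: "complex mat"
  assumes A: "A \<in> carrier_mat n n" and "0 < n"
  shows "\<exists>a. eigenvalue A a"
proof -
  obtain as where cp: "char_poly A = (\<Prod>a\<leftarrow>as. [:-a,1:])" and "length as = n"
    using char_poly_factorized[OF A] by blast
  then obtain a where "a \<in> set as" using \<open>0 < n\<close> by (cases as) auto
  then have "poly (char_poly A) a = 0"
    unfolding cp poly_prod_list by (simp add: prod_list_zero_iff o_def)
  then show ?thesis using eigenvalue_root_char_poly[OF A] by blast
qed

lemma eigenvalue_of_real_mat_iff:
  fixes A :: "real mat"
  assumes A: "A \<in> carrier_mat n n"
  shows "eigenvalue (map_mat complex_of_real A) (complex_of_real \<mu>) \<longleftrightarrow> eigenvalue A \<mu>"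
proof -
  have "map_mat complex_of_real A \<in> carrier_mat n n" using A by simp
  then have "eigenvalue (map_mat complex_of_real A) (complex_of_real \<mu>)
      \<longleftrightarrow> poly (map_poly complex_of_real (char_poly A)) (complex_of_real \<mu>) = 0"
    by (simp add: eigenvalue_root_char_poly of_real_hom.char_poly_hom[OF A])
  also have "\<dots> \<longleftrightarrow> eigenvalue A \<mu>"
    by (simp add: of_real_hom.poly_map_poly eigenvalue_root_char_poly[OF A])
  finally show ?thesis .
qed

text \<open>If \<open>B v = a v\<close> with \<open>B\<close> real symmetric, then \<open>conj v \<bullet> B v\<close> equals both
  \<open>a |v|\<^sup>2\<close> and \<open>cnj a |v|\<^sup>2\<close>.\<close>
lemma eigenvalue_real_symmetric_is_real:
  fixes A :: "real mat"
  assumes A: "A \<in> carrier_mat n n" and sym: "transpose_mat A = A"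
    and ev: "eigenvalue (map_mat complex_of_real A) a"
  shows "cnj a = a"
proof -
  define B where "B = map_mat complex_of_real A"
  have B: "B \<in> carrier_mat n n" and symB: "transpose_mat B = B"
    unfolding B_def using A sym by (auto simp: map_mat_transpose)
  obtain v where v: "v \<in> carrier_vec n" "v \<noteq> 0\<^sub>v n" and Bv: "B *\<^sub>v v = a \<cdot>\<^sub>v v"
    using ev B unfolding B_def[symmetric] eigenvalue_def eigenvector_def by auto
  define w where "w = conjugate v"
  have w: "w \<in> carrier_vec n" unfolding w_def using v by simp
  have Bw: "B *\<^sub>v w = cnj a \<cdot>\<^sub>v w"
  proof (rule eq_vecI)
    fix i assume "i < dim_vec (cnj a \<cdot>\<^sub>v w)"
    then have i: "i < n" using w by simp
    have "conjugate (row B i) = row B i"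
      using B i unfolding B_def by (intro eq_vecI) auto
    then have "row B i \<bullet> w = conjugate (row B i \<bullet> v)"
      unfolding w_def using B v i by (subst conjugate_sprod_vec[of _ n]) auto
    also have "row B i \<bullet> v = a * v $ i" using arg_cong[OF Bv, of "\<lambda>u. u $ i"] B v i by simp
    finally show "(B *\<^sub>v w) $ i = (cnj a \<cdot>\<^sub>v w) $ i"
      using B w v i unfolding w_def by simp
  qed (use B w in simp)
  have "a * (w \<bullet> v) = w \<bullet> (B *\<^sub>v v)" using v w by (simp add: Bv)
  also have "\<dots> = (transpose_mat B *\<^sub>v w) \<bullet> v" using transpose_vec_mult_scalar[OF B v(1) w] ..
  also have "\<dots> = cnj a * (w \<bullet> v)" using v w by (simp add: symB Bw)
  finally have "a * (w \<bullet> v) = cnj a * (w \<bullet> v)" .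
  moreover have "w \<bullet> v \<noteq> 0"
    using v conjugate_square_greater_0_vec[OF v(1)] comm_scalar_prod[OF w v(1)] unfolding w_def by auto
  ultimately show ?thesis by simp
qed

lemma real_symmetric_mat_has_eigenvalue:
  fixes A :: "real mat"
  assumes A: "A \<in> carrier_mat n n" and sym: "transpose_mat A = A" and "0 < n"
  shows "\<exists>\<mu>. eigenvalue A \<mu>"
proof -
  obtain a where a: "eigenvalue (map_mat complex_of_real A) a"
    using complex_mat_has_eigenvalue[of "map_mat complex_of_real A" n] A \<open>0 < n\<close> by auto
  have "a = complex_of_real (Re a)"
    using eigenvalue_real_symmetric_is_real[OF A sym a] by (simp add: complex_eq_iff)
  then show ?thesis using a eigenvalue_of_real_mat_iff[OF A] by metis
qed

lemma signed_Kn_carrier: "signed_Kn n H \<in> carrier_mat n n"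
  unfolding signed_Kn_def by simp

lemma transpose_signed_Kn: "transpose_mat (signed_Kn n H) = signed_Kn n H"
  unfolding signed_Kn_def by (rule eq_matI) (auto simp: insert_commute)

lemma signed_Kn_has_eigenvalue: "0 < n \<Longrightarrow> eigenvalue (signed_Kn n H) (index (signed_Kn n H))"
  using real_symmetric_mat_has_eigenvalue[OF signed_Kn_carrier transpose_signed_Kn]
    eigenvalue_index[OF signed_Kn_carrier] by blast

lemma eigenvalue_signed_Kn_iff:
  "eigenvalue (signed_Kn n H) \<mu> \<longleftrightarrow>
    (\<exists>v \<in> carrier_vec n. v \<noteq> 0\<^sub>v n \<and> signed_Kn n H *\<^sub>v v = \<mu> \<cdot>\<^sub>v v)"
  using carrier_matD(1)[OF signed_Kn_carrier] unfolding eigenvalue_def eigenvector_def by metis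

lemma signed_Kn_eigen_iff:
  assumes v: "v \<in> carrier_vec n" and loopless: "\<And>i. {i} \<notin> H"
  shows "signed_Kn n H *\<^sub>v v = \<mu> \<cdot>\<^sub>v v \<longleftrightarrow>
    (\<forall>i<n. (\<mu> + 1) * v$i = (\<Sum>j<n. v$j) - 2 * (\<Sum>j<n. if {i,j} \<in> H then v$j else 0))"
proof -
  have row: "(signed_Kn n H *\<^sub>v v) $ i
      = (\<Sum>j<n. v$j) - v$i - 2 * (\<Sum>j<n. if {i,j} \<in> H then v$j else 0)" if i: "i < n" for i
  proof -
    have "(signed_Kn n H *\<^sub>v v) $ i
        = (\<Sum>j<n. v$j - (if j = i then v$j else 0) - 2 * (if {i,j} \<in> H then v$j else 0))"
      using v i loopless[of i]
      by (auto simp: signed_Kn_def scalar_prod_def atLeast0LessThan intro!: sum.cong)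
    also have "\<dots> = (\<Sum>j<n. v$j) - v$i - 2 * (\<Sum>j<n. if {i,j} \<in> H then v$j else 0)"
      using i by (simp add: sum_subtractf sum_distrib_left sum.delta')
    finally show ?thesis .
  qed
  have "signed_Kn n H *\<^sub>v v = \<mu> \<cdot>\<^sub>v v \<longleftrightarrow> (\<forall>i<n. (signed_Kn n H *\<^sub>v v) $ i = \<mu> * v$i)"
    using v signed_Kn_carrier[of n H] by (auto simp: vec_eq_iff)
  then show ?thesis using row by (auto simp: algebra_simps)
qed

lemma Q_edges_loopless: "{i} \<notin> Q_edges s t"
  unfolding Q_edges_def C4_edges_def by (auto simp: doubleton_eq_iff)

lemma Q_edges_adjacency:
  shows "{0,j} \<in> Q_edges s t \<longleftrightarrow> j = 1 \<or> j = 3 \<or> (4 \<le> j \<and> j < 4+s)"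
    and "{1,j} \<in> Q_edges s t \<longleftrightarrow> j = 0 \<or> j = 2 \<or> (4+s \<le> j \<and> j < 4+s+t)"
    and "{2,j} \<in> Q_edges s t \<longleftrightarrow> j = 1 \<or> j = 3"
    and "{3,j} \<in> Q_edges s t \<longleftrightarrow> j = 0 \<or> j = 2"
    and "4 \<le> i \<Longrightarrow> i < 4+s \<Longrightarrow> {i,j} \<in> Q_edges s t \<longleftrightarrow> j = 0"
    and "4+s \<le> i \<Longrightarrow> i < 4+s+t \<Longrightarrow> {i,j} \<in> Q_edges s t \<longleftrightarrow> j = 1"
    and "4+s+t \<le> i \<Longrightarrow> {i,j} \<notin> Q_edges s t"
  unfolding Q_edges_def C4_edges_def by (auto simp: doubleton_eq_iff)

lemma sum_lessThan_split_Q: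
  fixes f :: "nat \<Rightarrow> 'a::comm_monoid_add"
  assumes "4+s+t \<le> n"
  shows "(\<Sum>j<n. f j) = f 0 + f 1 + f 2 + f 3 + (\<Sum>j\<in>{4..<4+s}. f j)
    + (\<Sum>j\<in>{4+s..<4+s+t}. f j) + (\<Sum>j\<in>{4+s+t..<n}. f j)"
proof -
  have "(\<Sum>j<n. f j) = (\<Sum>j\<in>{0..<4}. f j) + (\<Sum>j\<in>{4..<n}. f j)"
    using assms by (simp add: atLeast0LessThan[symmetric] sum.atLeastLessThan_concat)
  also have "(\<Sum>j\<in>{4..<n}. f j) = (\<Sum>j\<in>{4..<4+s}. f j) + (\<Sum>j\<in>{4+s..<n}. f j)"
    using assms by (simp add: sum.atLeastLessThan_concat)
  also have "(\<Sum>j\<in>{4+s..<n}. f j) = (\<Sum>j\<in>{4+s..<4+s+t}. f j) + (\<Sum>j\<in>{4+s+t..<n}. f j)"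
    using assms by (simp add: sum.atLeastLessThan_concat)
  also have "(\<Sum>j\<in>{0..<4}. f j) = f 0 + f 1 + f 2 + f 3"
    by (simp add: numeral_eq_Suc atLeast0_lessThan_Suc add_ac)
  finally show ?thesis by (simp only: add.assoc)
qed

lemma all_lessThan_split_Q:
  fixes P :: "nat \<Rightarrow> bool"
  assumes "4+s+t \<le> n"
  shows "(\<forall>i<n. P i) \<longleftrightarrow> P 0 \<and> P 1 \<and> P 2 \<and> P 3 \<and> (\<forall>i\<in>{4..<4+s}. P i)
    \<and> (\<forall>i\<in>{4+s..<4+s+t}. P i) \<and> (\<forall>i\<in>{4+s+t..<n}. P i)"
proof -
  have "{..<n} = {0,1,2,3} \<union> {4..<4+s} \<union> {4+s..<4+s+t} \<union> {4+s+t..<n}"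
    using assms by auto
  then have "(\<forall>i<n. P i) \<longleftrightarrow> (\<forall>i\<in>{0,1,2,3} \<union> {4..<4+s} \<union> {4+s..<4+s+t} \<union> {4+s+t..<n}. P i)"
    by (metis lessThan_iff)
  then show ?thesis by (simp only: ball_Un ball_simps conj_assoc simp_thms)
qed

lemma Q_neighbour_sums:
  fixes f :: "nat \<Rightarrow> real"
  assumes n: "4+s+t \<le> n"
  shows "(\<Sum>j<n. if {0,j} \<in> Q_edges s t then f j else 0) = f 1 + f 3 + (\<Sum>j\<in>{4..<4+s}. f j)"
    and "(\<Sum>j<n. if {1,j} \<in> Q_edges s t then f j else 0) = f 0 + f 2 + (\<Sum>j\<in>{4+s..<4+s+t}. f j)"
    and "(\<Sum>j<n. if {2,j} \<in> Q_edges s t then f j else 0) = f 1 + f 3"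
    and "(\<Sum>j<n. if {3,j} \<in> Q_edges s t then f j else 0) = f 0 + f 2"
    and "4 \<le> i \<Longrightarrow> i < 4+s \<Longrightarrow> (\<Sum>j<n. if {i,j} \<in> Q_edges s t then f j else 0) = f 0"
    and "4+s \<le> i \<Longrightarrow> i < 4+s+t \<Longrightarrow> (\<Sum>j<n. if {i,j} \<in> Q_edges s t then f j else 0) = f 1"
    and "4+s+t \<le> i \<Longrightarrow> (\<Sum>j<n. if {i,j} \<in> Q_edges s t then f j else 0) = 0"
  by (subst sum_lessThan_split_Q[OF n],
      simp add: Q_edges_loopless Q_edges_adjacency Q_edges_adjacency(2)[unfolded One_nat_def] cong: sum.cong_simp)+

lemma signed_Kn_Q_eigen_iff:
  fixes v :: "real vec"
  assumes n: "4+s+t \<le> n" and v: "v \<in> carrier_vec n"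
  defines "S \<equiv> \<Sum>j<n. v$j"
  shows "signed_Kn n (Q_edges s t) *\<^sub>v v = \<mu> \<cdot>\<^sub>v v \<longleftrightarrow>
      (\<mu>+1) * v$0 = S - 2 * (v$1 + v$3 + (\<Sum>j\<in>{4..<4+s}. v$j))
    \<and> (\<mu>+1) * v$1 = S - 2 * (v$0 + v$2 + (\<Sum>j\<in>{4+s..<4+s+t}. v$j))
    \<and> (\<mu>+1) * v$2 = S - 2 * (v$1 + v$3)
    \<and> (\<mu>+1) * v$3 = S - 2 * (v$0 + v$2)
    \<and> (\<forall>i\<in>{4..<4+s}. (\<mu>+1) * v$i = S - 2 * v$0)
    \<and> (\<forall>i\<in>{4+s..<4+s+t}. (\<mu>+1) * v$i = S - 2 * v$1)
    \<and> (\<forall>i\<in>{4+s+t..<n}. (\<mu>+1) * v$i = S)"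
  unfolding signed_Kn_eigen_iff[OF v Q_edges_loopless] all_lessThan_split_Q[OF n] S_def
  by (simp add: Q_neighbour_sums[OF n] Q_neighbour_sums(2)[OF n, unfolded One_nat_def])

lemma Q1_edges_eq_Q_edges: "Q1_edges (m+4) = Q_edges m 0"
  unfolding Q1_edges_def Q_edges_def by auto

definition Q_poly :: "real \<Rightarrow> real \<Rightarrow> real \<Rightarrow> real \<Rightarrow> real" where
  "Q_poly s t r x = 16*s*t*r*x^2 - 64*s*t*r - 8*s*t*x^4 + 32*s*t*x^2 - 4*s*r*x^4 + 32*s*r*x^2
    + s*x^6 - 12*s*x^4 - 4*t*r*x^4 + 32*t*r*x^2 + t*x^6 - 12*t*x^4 + r*x^6 - 16*r*x^4 - x^7 + 4*x^6"

definition Q1_poly :: "real \<Rightarrow> real \<Rightarrow> real \<Rightarrow> real" where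
  "Q1_poly m r x = x^5 - (m+r+4)*x^4 + (12*m+16*r+4*m*r)*x^2 - 32*m*r"

lemma Q_poly_via_Q1_poly:
  "Q_poly s t r x = - (x^2 * Q1_poly (s+t) r x + 8*s*t*(x^2-4)*(x^2-2*r))"
  unfolding Q_poly_def Q1_poly_def by (simp add: algebra_simps power_numeral_reduce)

text \<open>\<open>Q_poly s t r x\<close> is the determinant of the system in the assumptions; each \<open>adj_\<close> identity
  writes it times one unknown as the combination of the equations given by a row of the adjugate.\<close>
lemma Q_poly_eq_0_if_quotient_solution:
  fixes x s t r a b c d S :: real
  assumes "(x^2-4*s)*a + 2*x*b + 2*x*d + (2*s - x)*S = 0"
    and "2*x*a + (x^2-4*t)*b + 2*x*c + (2*t - x)*S = 0"
    and "2*b + x*c + 2*d - S = 0"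
    and "2*a + 2*c + x*d - S = 0"
    and "(x-2*s)*a + (x-2*t)*b + x*c + x*d + (s+t+r-x)*S = 0"
    and nontrivial: "a \<noteq> 0 \<or> b \<noteq> 0 \<or> c \<noteq> 0 \<or> d \<noteq> 0 \<or> S \<noteq> 0"
  shows "Q_poly s t r x = 0"
proof -
  define L1 where "L1 = (x^2-4*s)*a + 2*x*b + 2*x*d + (2*s - x)*S"
  define L2 where "L2 = 2*x*a + (x^2-4*t)*b + 2*x*c + (2*t - x)*S"
  define L3 where "L3 = 2*b + x*c + 2*d - S"
  define L4 where "L4 = 2*a + 2*c + x*d - S"
  define L5 where "L5 = (x-2*s)*a + (x-2*t)*b + x*c + x*d + (s+t+r-x)*S"
  note L_defs = L1_def L2_def L3_def L4_def L5_def
  have adj_a: "Q_poly s t r x * a =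
      (- 4*s*t*x^2 + 16*s*t + s*x^4 - 8*s*x^2 - 4*t*r*x^2 + 16*t*r + t*x^4 - 8*t*x^2 + r*x^4 - 8*r*x^2 - x^5 + 3*x^4) * L1
    + (- 4*s*t*x^2 + 16*s*t - 4*s*x^2 - 4*t*x^2 - 2*r*x^3 + x^4) * L2
    + (2*s*x^4 - 16*t*r*x + 4*t*x^3 + 8*r*x^3 - x^5) * L3
    + (- 4*s*x^3 + 8*t*r*x^2 - 2*t*x^4 - 2*r*x^4 + x^5) * L4
    + (8*s*t*x^2 - 32*s*t - 2*s*x^4 + 16*s*x^2 + 8*t*x^2 + x^5 - 4*x^4) * L5"
    unfolding Q_poly_def L_defs
    by (simp add: algebra_simps power2_eq_square power3_eq_cube power4_eq_xxxx power_numeral_reduce)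
  have adj_b: "Q_poly s t r x * b =
      (- 4*s*t*x^2 + 16*s*t - 4*s*x^2 - 4*t*x^2 - 2*r*x^3 + x^4) * L1
    + (- 4*s*t*x^2 + 16*s*t - 4*s*r*x^2 + 16*s*r + s*x^4 - 8*s*x^2 + t*x^4 - 8*t*x^2 + r*x^4 - 8*r*x^2 - x^5 + 3*x^4) * L2
    + (8*s*r*x^2 - 2*s*x^4 - 4*t*x^3 - 2*r*x^4 + x^5) * L3
    + (- 16*s*r*x + 4*s*x^3 + 2*t*x^4 + 8*r*x^3 - x^5) * L4
    + (8*s*t*x^2 - 32*s*t + 8*s*x^2 - 2*t*x^4 + 16*t*x^2 + x^5 - 4*x^4) * L5"
    unfolding Q_poly_def L_defs
    by (simp add: algebra_simps power2_eq_square power3_eq_cube power4_eq_xxxx power_numeral_reduce)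
  have adj_c: "Q_poly s t r x * c =
      (2*s*x^3 - 16*t*r + 4*t*x^2 + 8*r*x^2 - x^4) * L1
    + (8*s*r*x - 2*s*x^3 - 4*t*x^2 - 2*r*x^3 + x^4) * L2
    + (16*s*t*r*x - 8*s*t*x^3 - 4*s*r*x^3 + s*x^5 - 4*t*r*x^3 + 16*t*r*x + t*x^5 - 8*t*x^3 + r*x^5 - 8*r*x^3 - x^6 + 3*x^5) * L3
    + (- 32*s*t*r + 16*s*t*x^2 + 8*s*r*x^2 - 2*s*x^4 + 8*t*r*x^2 - 2*t*x^4 - 2*r*x^4 + x^5) * L4
    + (- 4*s*x^3 + 8*t*x^2 + x^5 - 4*x^4) * L5"
    unfolding Q_poly_def L_defs
    by (simp add: algebra_simps power2_eq_square power3_eq_cube power4_eq_xxxx power_numeral_reduce)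
  have adj_d: "Q_poly s t r x * d =
      (- 4*s*x^2 + 8*t*r*x - 2*t*x^3 - 2*r*x^3 + x^4) * L1
    + (- 16*s*r + 4*s*x^2 + 2*t*x^3 + 8*r*x^2 - x^4) * L2
    + (- 32*s*t*r + 16*s*t*x^2 + 8*s*r*x^2 - 2*s*x^4 + 8*t*r*x^2 - 2*t*x^4 - 2*r*x^4 + x^5) * L3
    + (16*s*t*r*x - 8*s*t*x^3 - 4*s*r*x^3 + 16*s*r*x + s*x^5 - 8*s*x^3 - 4*t*r*x^3 + t*x^5 + r*x^5 - 8*r*x^3 - x^6 + 3*x^5) * L4
    + (8*s*x^2 - 4*t*x^3 + x^5 - 4*x^4) * L5"
    unfolding Q_poly_def L_defs
    by (simp add: algebra_simps power2_eq_square power3_eq_cube power4_eq_xxxx power_numeral_reduce)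
  have adj_S: "Q_poly s t r x * S =
      (- 8*s*t*x^2 + 32*s*t + 2*s*x^4 - 16*s*x^2 - 8*t*x^2 - x^5 + 4*x^4) * L1
    + (- 8*s*t*x^2 + 32*s*t - 8*s*x^2 + 2*t*x^4 - 16*t*x^2 - x^5 + 4*x^4) * L2
    + (4*s*x^4 - 8*t*x^3 - x^6 + 4*x^5) * L3
    + (- 8*s*x^3 + 4*t*x^4 - x^6 + 4*x^5) * L4
    + (16*s*t*x^2 - 64*s*t - 4*s*x^4 + 32*s*x^2 - 4*t*x^4 + 32*t*x^2 + x^6 - 16*x^4) * L5"
    unfolding Q_poly_def L_defs
    by (simp add: algebra_simps power2_eq_square power3_eq_cube power4_eq_xxxx power_numeral_reduce)
  have "L1 = 0" "L2 = 0" "L3 = 0" "L4 = 0" "L5 = 0"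
    using assms(1-5) unfolding L_defs by simp_all
  then have "Q_poly s t r x * a = 0" "Q_poly s t r x * b = 0" "Q_poly s t r x * c = 0"
    "Q_poly s t r x * d = 0" "Q_poly s t r x * S = 0"
    using adj_a adj_b adj_c adj_d adj_S by simp_all
  then show ?thesis using nontrivial by auto
qed

lemma Q_eigenvector_quotient_equations:
  fixes v :: "real vec" and s t r :: nat and \<mu> x :: real
  assumes n: "n = s+t+4+r" and v: "v \<in> carrier_vec n"
    and ev: "signed_Kn n (Q_edges s t) *\<^sub>v v = \<mu> \<cdot>\<^sub>v v"
  defines "x \<equiv> \<mu> + 1" and "S \<equiv> \<Sum>j<n. v$j"
  shows "(x^2-4*real s)*v$0 + 2*x*v$1 + 2*x*v$3 + (2*real s - x)*S = 0"
    and "2*x*v$0 + (x^2-4*real t)*v$1 + 2*x*v$2 + (2*real t - x)*S = 0"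
    and "2*v$1 + x*v$2 + 2*v$3 - S = 0"
    and "2*v$0 + 2*v$2 + x*v$3 - S = 0"
    and "(x-2*real s)*v$0 + (x-2*real t)*v$1 + x*v$2 + x*v$3 + (real s + real t + real r - x)*S = 0"
proof -
  have n': "4+s+t \<le> n" using n by simp
  define P where "P = (\<Sum>j\<in>{4..<4+s}. v$j)"
  define R where "R = (\<Sum>j\<in>{4+s..<4+s+t}. v$j)"
  define Z where "Z = (\<Sum>j\<in>{4+s+t..<n}. v$j)"
  note eqs = ev[unfolded signed_Kn_Q_eigen_iff[OF n' v], folded x_def S_def P_def R_def]
  have xP: "x*P = real s * (S - 2*v$0)" unfolding P_def using eqs by (simp add: sum_distrib_left)
  have xR: "x*R = real t * (S - 2*v$1)" unfolding R_def using eqs by (simp add: sum_distrib_left)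
  have xZ: "x*Z = real r * S" unfolding Z_def using eqs n by (simp add: sum_distrib_left)
  have S: "S = v$0 + v$1 + v$2 + v$3 + P + R + Z"
    unfolding S_def P_def R_def Z_def using sum_lessThan_split_Q[OF n'] by simp
  show "(x^2-4*real s)*v$0 + 2*x*v$1 + 2*x*v$3 + (2*real s - x)*S = 0"
  proof -
    have "(x^2-4*real s)*v$0 + 2*x*v$1 + 2*x*v$3 + (2*real s - x)*S
        = x*(x*v$0 - (S - 2*(v$1 + v$3 + P))) - 2*(x*P - real s*(S - 2*v$0))"
      by (simp add: algebra_simps power2_eq_square)
    then show ?thesis using eqs xP by simp
  qed
  show "2*x*v$0 + (x^2-4*real t)*v$1 + 2*x*v$2 + (2*real t - x)*S = 0"
  proof -
    have "2*x*v$0 + (x^2-4*real t)*v$1 + 2*x*v$2 + (2*real t - x)*S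
        = x*(x*v$1 - (S - 2*(v$0 + v$2 + R))) - 2*(x*R - real t*(S - 2*v$1))"
      by (simp add: algebra_simps power2_eq_square)
    then show ?thesis using eqs xR by simp
  qed
  show "2*v$1 + x*v$2 + 2*v$3 - S = 0" "2*v$0 + 2*v$2 + x*v$3 - S = 0"
    using eqs by simp_all
  have "(x-2*real s)*v$0 + (x-2*real t)*v$1 + x*v$2 + x*v$3 + (real s + real t + real r - x)*S
      = x*(v$0 + v$1 + v$2 + v$3 + P + R + Z - S) - (x*P - real s*(S - 2*v$0))
        - (x*R - real t*(S - 2*v$1)) - (x*Z - real r*S)"
    by (simp add: algebra_simps)
  then show "(x-2*real s)*v$0 + (x-2*real t)*v$1 + x*v$2 + x*v$3 + (real s + real t + real r - x)*S = 0"
    using S xP xR xZ by simp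
qed

lemma Q_eigenvalue_root:
  fixes s t r :: nat
  assumes ev: "eigenvalue (signed_Kn (s+t+4+r) (Q_edges s t)) \<mu>" and "\<mu> \<noteq> -1"
  shows "Q_poly s t r (\<mu>+1) = 0"
proof -
  define n where "n = s+t+4+r"
  have n': "4+s+t \<le> n" unfolding n_def by simp
  obtain v where v: "v \<in> carrier_vec n" "v \<noteq> 0\<^sub>v n"
    and Av: "signed_Kn n (Q_edges s t) *\<^sub>v v = \<mu> \<cdot>\<^sub>v v"
    using ev unfolding eigenvalue_signed_Kn_iff n_def[symmetric] by blast
  define S where "S = (\<Sum>j<n. v$j)"
  have "v$0 \<noteq> 0 \<or> v$1 \<noteq> 0 \<or> v$2 \<noteq> 0 \<or> v$3 \<noteq> 0 \<or> S \<noteq> 0"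
  proof (rule ccontr)
    assume "\<not> ?thesis"
    then have "\<forall>i<n. v$i = 0"
      using Av \<open>\<mu> \<noteq> -1\<close> unfolding signed_Kn_Q_eigen_iff[OF n' v(1)] all_lessThan_split_Q[OF n']
      by (simp add: S_def)
    then show False using v by (auto simp: vec_eq_iff)
  qed
  then show ?thesis
    using Q_poly_eq_0_if_quotient_solution[OF Q_eigenvector_quotient_equations[OF n_def v(1) Av]]
    unfolding S_def by blast
qed

lemma homogeneous_2x2_nontrivial_solution:
  fixes \<alpha>1 \<beta>1 \<alpha>2 \<beta>2 :: "'a::field"
  assumes "\<alpha>1 * \<beta>2 = \<beta>1 * \<alpha>2"
  shows "\<exists>u w. (u \<noteq> 0 \<or> w \<noteq> 0) \<and> \<alpha>1*u + \<beta>1*w = 0 \<and> \<alpha>2*u + \<beta>2*w = 0"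
proof -
  consider "\<alpha>1 \<noteq> 0 \<or> \<beta>1 \<noteq> 0" | "\<alpha>2 \<noteq> 0 \<or> \<beta>2 \<noteq> 0" | "\<alpha>1 = 0 \<and> \<beta>1 = 0 \<and> \<alpha>2 = 0 \<and> \<beta>2 = 0"
    by blast
  then show ?thesis
  proof cases
    case 1
    then show ?thesis using assms
      by (intro exI[of _ "\<beta>1"] exI[of _ "-\<alpha>1"]) (auto simp: algebra_simps)
  next
    case 2
    then show ?thesis using assms
      by (intro exI[of _ "\<beta>2"] exI[of _ "-\<alpha>2"]) (auto simp: algebra_simps)
  qed (intro exI[of _ 1] exI[of _ 0], auto)
qed

text \<open>Solutions of the quotient system of \<open>Q(m,0)\<close> that are symmetric in \<open>v\<^sub>2\<close> and \<open>v\<^sub>4\<close>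
  (here \<open>a, b, c\<close> are the values at \<open>v\<^sub>1, v\<^sub>2 = v\<^sub>4, v\<^sub>3\<close>). Prescribing \<open>b = 2u\<close>, \<open>c = 2w\<close>
  and solving the middle two equations for \<open>a\<close> and \<open>S\<close> leaves a \<open>2\<times>2\<close> system in \<open>(u, w)\<close>
  of determinant \<open>2 Q1_poly m r x\<close>.\<close>
lemma Q1_quotient_solution_of_root:
  fixes m r x :: real
  assumes "Q1_poly m r x = 0"
  shows "\<exists>a b c S. (b \<noteq> 0 \<or> c \<noteq> 0) \<and> (x^2-4*m)*a + 4*x*b + (2*m-x)*S = 0
     \<and> x*b = S - 2*a - 2*c \<and> x*c = S - 4*b \<and> (x-2*m)*a + 2*x*b + x*c + (m+r-x)*S = 0"
proof -
  define \<alpha>1 where "\<alpha>1 = 4*m*x - x^3 + 4*x^2"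
  define \<beta>1 where "\<beta>1 = 8*m + x^3 - 4*x^2"
  define \<alpha>2 where "\<alpha>2 = 2*m*x + 8*r - x^2"
  define \<beta>2 where "\<beta>2 = 4*m + 2*r*x - x^2"
  have "\<alpha>1*\<beta>2 - \<beta>1*\<alpha>2 = 2 * Q1_poly m r x"
    unfolding \<alpha>1_def \<beta>1_def \<alpha>2_def \<beta>2_def Q1_poly_def
    by (simp add: algebra_simps power_numeral_reduce)
  then obtain u w where uw: "u \<noteq> 0 \<or> w \<noteq> 0" "\<alpha>1*u + \<beta>1*w = 0" "\<alpha>2*u + \<beta>2*w = 0"
    using homogeneous_2x2_nontrivial_solution[of \<alpha>1 \<beta>2 \<beta>1 \<alpha>2] assms by auto
  define a where "a = (x-2)*w - (x-4)*u"
  define S where "S = 2*x*w + 8*u"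
  have "(x^2-4*m)*a + 4*x*(2*u) + (2*m-x)*S = \<alpha>1*u + \<beta>1*w"
    "(x-2*m)*a + 2*x*(2*u) + x*(2*w) + (m+r-x)*S = \<alpha>2*u + \<beta>2*w"
    unfolding a_def S_def \<alpha>1_def \<beta>1_def \<alpha>2_def \<beta>2_def
    by (simp_all add: algebra_simps power_numeral_reduce)
  moreover have "x*(2*u) = S - 2*a - 2*(2*w)" "x*(2*w) = S - 4*(2*u)"
    unfolding a_def S_def by (simp_all add: algebra_simps)
  ultimately show ?thesis using uw by (intro exI[of _ a] exI[of _ "2*u"] exI[of _ "2*w"] exI[of _ S]) auto
qed

lemma Q1_eigenvalue_of_root:
  fixes m r :: nat and x :: real
  assumes root: "Q1_poly m r x = 0" and "x \<noteq> 0"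
  shows "eigenvalue (signed_Kn (m+4+r) (Q_edges m 0)) (x-1)"
proof -
  define n where "n = m+4+r"
  have n': "4+m+0 \<le> n" unfolding n_def by simp
  obtain a b c S where sol: "b \<noteq> 0 \<or> c \<noteq> 0" "(x^2-4*real m)*a + 4*x*b + (2*real m-x)*S = 0"
    "x*b = S - 2*a - 2*c" "x*c = S - 4*b" "(x-2*real m)*a + 2*x*b + x*c + (real m+real r-x)*S = 0"
    using Q1_quotient_solution_of_root[OF root] by blast
  define v where "v = vec n (\<lambda>i. if i = 0 then a else if i = 1 \<or> i = 3 then b else if i = 2 then c
      else if i < 4+m then (S-2*a)/x else S/x)"
  have v: "v \<in> carrier_vec n" unfolding v_def by simp
  have P: "(\<Sum>j\<in>{4..<4+m}. v$j) = m * ((S-2*a)/x)"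
    unfolding v_def n_def by (simp cong: sum.cong_simp)
  have Z: "(\<Sum>j\<in>{4+m+0..<n}. v$j) = r * (S/x)"
    unfolding v_def n_def by (simp cong: sum.cong_simp)
  have "(\<Sum>j<n. v$j) = a + b + c + b + m * ((S-2*a)/x) + r * (S/x)"
    using sum_lessThan_split_Q[OF n', of "\<lambda>j. v$j"] P Z unfolding v_def n_def by simp
  also have "\<dots> = S" using sol(5) \<open>x \<noteq> 0\<close> by (simp add: field_simps)
  finally have sum: "(\<Sum>j<n. v$j) = S" .
  have "x*a = S - 2*(b + b + m*((S-2*a)/x))"
    using sol(2) \<open>x \<noteq> 0\<close> by (simp add: field_simps power2_eq_square)
  then have "signed_Kn n (Q_edges m 0) *\<^sub>v v = (x-1) \<cdot>\<^sub>v v"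
    unfolding signed_Kn_Q_eigen_iff[OF n' v] sum P using sol \<open>x \<noteq> 0\<close>
    by (simp add: v_def n_def)
  moreover have "v \<noteq> 0\<^sub>v n"
  proof
    assume "v = 0\<^sub>v n"
    then have "v$1 = 0" "v$2 = 0" unfolding n_def by auto
    then show False using sol(1) unfolding v_def n_def by simp
  qed
  ultimately show ?thesis
    unfolding eigenvalue_signed_Kn_iff n_def[symmetric] using v by blast
qed

lemma Q1_poly_neg:
  fixes m r :: real
  assumes m: "m \<ge> 2" and r: "r \<ge> 0"
  shows "Q1_poly m r (m+r+2) < 0"
proof -
  define a where "a = m - 2"
  have a: "a \<ge> 0" using m a_def by simp
  have "- Q1_poly m r (m+r+2) = (2*a^4 + 4*a^3*r + 20*a^3 + 4*a^2*r^2 + 16*a^2*r + 72*a^2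
      + 4*a*r^3 + 4*a*r^2 + 16*a*r + 128*a) + (2*r^4 + 8*r^3 - 24*r^2 + 128)"
    unfolding Q1_poly_def by (simp add: a_def algebra_simps power_numeral_reduce)
  moreover have "2*a^4 + 4*a^3*r + 20*a^3 + 4*a^2*r^2 + 16*a^2*r + 72*a^2
      + 4*a*r^3 + 4*a*r^2 + 16*a*r + 128*a \<ge> 0"
    using a r by (intro add_nonneg_nonneg mult_nonneg_nonneg zero_le_power) auto
  moreover have "2*r^4 + 8*r^3 - 24*r^2 + 128 > 0"
  proof (cases "r \<ge> 2")
    case True
    then have "r^2 \<ge> 4" using power_mono[of 2 r 2] by simp
    then have "2*r^2 + 8*r - 24 \<ge> 0" using True by linarith
    then have "r^2 * (2*r^2 + 8*r - 24) \<ge> 0" by simp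
    then show ?thesis by (simp add: algebra_simps power_numeral_reduce)
  next
    case False
    then have "r^2 \<le> 4" using r power_mono[of r 2 2] by simp
    moreover have "r^4 \<ge> 0" "r^3 \<ge> 0" using r by simp_all
    ultimately show ?thesis by linarith
  qed
  ultimately show ?thesis by linarith
qed

lemma Q1_poly_pos:
  fixes m r y :: real
  assumes m: "m \<ge> 1" and r: "r \<ge> 0" and y: "y \<ge> m+r+4"
  shows "Q1_poly m r y > 0"
proof -
  have "y \<ge> 4" using y m r by linarith
  then have y2: "y^2 \<ge> 16" using power_mono[of 4 y 2] by simp
  have "Q1_poly m r y = y^4*(y - (m+r+4)) + (12*m+16*r)*y^2 + 4*m*r*(y^2 - 8)"
    unfolding Q1_poly_def by (simp add: algebra_simps power_numeral_reduce)
  moreover have "y^4*(y - (m+r+4)) \<ge> 0" using y by simp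
  moreover have "(12*m+16*r)*y^2 > 0" using m r y2 by (intro mult_pos_pos) auto
  moreover have "4*m*r*(y^2 - 8) \<ge> 0" using m r y2 by (intro mult_nonneg_nonneg) auto
  ultimately show ?thesis by linarith
qed

lemma Q1_poly_root_above:
  fixes m r x :: real
  assumes m: "m \<ge> 2" and r: "r \<ge> 0" and x: "Q1_poly m r x < 0 \<or> x < m+r+2"
  shows "\<exists>\<rho>>x. \<rho> > 0 \<and> Q1_poly m r \<rho> = 0"
proof -
  define y where "y = max x (m+r+2)"
  have neg: "Q1_poly m r y < 0" using x Q1_poly_neg[OF m r] by (auto simp: y_def max_def)
  then have "y \<le> m+r+4" using Q1_poly_pos[of m r y] m r by fastforce
  moreover have "continuous_on {y..m+r+4} (Q1_poly m r)"
    unfolding Q1_poly_def by (intro continuous_intros)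
  ultimately obtain \<rho> where "y \<le> \<rho>" "Q1_poly m r \<rho> = 0"
    using IVT'[of "Q1_poly m r" y 0 "m+r+4"] neg Q1_poly_pos[of m r "m+r+4"] m r by auto
  moreover have "\<rho> \<noteq> y" using neg \<open>Q1_poly m r \<rho> = 0\<close> by auto
  ultimately show ?thesis using m r by (intro exI[of _ \<rho>]) (auto simp: y_def)
qed

lemma Q1_poly_neg_at_large_Q_eigenvalue:
  fixes s t r :: nat
  assumes "s \<ge> 1" and "t \<ge> 1" and ev: "eigenvalue (signed_Kn (s+t+4+r) (Q_edges s t)) \<mu>"
    and large: "\<mu> + 1 \<ge> real s + real t + real r + 2"
  shows "Q1_poly (real s + real t) r (\<mu>+1) < 0"
proof -
  define x where "x = \<mu> + 1"
  have "x \<ge> real r + 4" using assms(1,2) large unfolding x_def by linarith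
  then have "x^2 \<ge> (real r + 4)^2" using power_mono[of "real r + 4" x 2] by simp
  moreover have "(real r + 4)^2 = (real r)^2 + 8*r + 16" by (simp add: power2_eq_square algebra_simps)
  ultimately have "x^2 - 4 > 0" "x^2 - 2*r > 0" using zero_le_power2[of "real r"] by linarith+
  then have "8*real s*real t*(x^2-4)*(x^2-2*real r) > 0" using assms(1,2) by simp
  moreover have "Q_poly s t r x = 0"
    using Q_eigenvalue_root[OF ev] \<open>x \<ge> real r + 4\<close> unfolding x_def by fastforce
  ultimately have "x^2 * Q1_poly (real s + real t) r x < 0"
    using Q_poly_via_Q1_poly[of s t r x] by linarith
  then show ?thesis unfolding x_def by (simp add: mult_less_0_iff)
qed

theorem corollary3p4:
  fixes s t k n :: nat
  assumes "s \<ge> 1" and "t \<ge> 1" and "k = s + t + 4" and "k \<le> n"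
  shows "index (signed_Kn n (Q_edges s t)) < index (signed_Kn n (Q1_edges k))"
proof -
  define r where "r = n - k"
  have n: "n = s+t+4+r" using assms(3,4) unfolding r_def by simp
  let ?\<mu> = "index (signed_Kn n (Q_edges s t))"
  have "eigenvalue (signed_Kn (s+t+4+r) (Q_edges s t)) ?\<mu>"
    using signed_Kn_has_eigenvalue[of n] n by simp
  then have "Q1_poly (real s + real t) r (?\<mu>+1) < 0 \<or> ?\<mu> + 1 < real s + real t + real r + 2"
    using Q1_poly_neg_at_large_Q_eigenvalue[OF assms(1,2)] by fastforce
  then obtain \<rho> where \<rho>: "\<rho> > ?\<mu> + 1" "\<rho> > 0" "Q1_poly (real (s+t)) r \<rho> = 0"
    using Q1_poly_root_above[of "real s + real t" r "?\<mu> + 1"] assms(1,2) by auto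
  have "eigenvalue (signed_Kn n (Q1_edges k)) (\<rho> - 1)"
    using Q1_eigenvalue_of_root[OF \<rho>(3)] \<rho>(2) Q1_edges_eq_Q_edges[of "s+t"] assms(3) n
    by (simp add: add.commute add.left_commute)
  then show ?thesis using eigenvalue_le_index[OF signed_Kn_carrier] \<rho>(1) by fastforce
qed

end
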